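(* Let $\zeta(dx)=e^{-U(x)}dx$ be a probability measure on $\mathbb R^d$ with $U\in C^2(\mathbb R^d)$, and suppose there exist $\alpha_U>0$ and $\tilde g_U\in\tilde{\mathcal G}$ such that $\kappa_U(r)\ge\alpha_U-r^{-1}\tilde g_U(r)$ for all $r>0$. Then for every $\sigma\in(0,\alpha_U/2)$, $\int\exp(\sigma|x|^2)\,\zeta(dx)<+\infty$.
   Context: For differentiable $U:\mathbb R^d\to\mathbb R$ and $r>0$, $\kappa_U(r):=\inf\{\langle\nabla U(x)-\nabla U(y),x-y\rangle/|x-y|^2: x,y\in\mathbb R^d,\ |x-y|=r\}$. $\mathcal G$ is the set of $g\in C^2((0,\infty),[0,\infty))$ such that $r\mapsto r^{1/2}g(r^{1/2})$ is non-decreasing and concave and $\lim_{r\downarrow0}rg(r)=0$; $\tilde{\mathcal G}$ is the set of bounded $g\in\mathcal G$ with $\lim_{r\downarrow0}g(r)=0$, $g'\ge0$ and $2g''+gg'\le0$. *)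

theory Defs
  imports "HOL-Analysis.Analysis"
begin

definition grad :: "('a::euclidean_space \<Rightarrow> real) \<Rightarrow> 'a \<Rightarrow> 'a" where
  "grad U x = (THE g. (U has_derivative (\<lambda>h. g \<bullet> h)) (at x))"

definition C2_on_UNIV :: "('a::euclidean_space \<Rightarrow> real) \<Rightarrow> bool" where
  "C2_on_UNIV U \<longleftrightarrow> (\<exists>G :: 'a \<Rightarrow> 'a. \<exists>H :: 'a \<Rightarrow> ('a \<Rightarrow>\<^sub>L 'a).
      (\<forall>x. (U has_derivative (\<lambda>h. G x \<bullet> h)) (at x)) \<and>
      (\<forall>x. (G has_derivative blinfun_apply (H x)) (at x)) \<and>
      continuous_on UNIV H)"

text \<open>kappa_U(r), taken in the extended reals so that an unbounded-below set gives -\<infinity>.\<close>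
definition kappa :: "('a::euclidean_space \<Rightarrow> real) \<Rightarrow> real \<Rightarrow> ereal" where
  "kappa U r = (INF p \<in> {(x, y). norm (x - y) = r}.
      ereal (((grad U (fst p) - grad U (snd p)) \<bullet> (fst p - snd p)) / (norm (fst p - snd p))\<^sup>2))"

definition C2_pos :: "(real \<Rightarrow> real) \<Rightarrow> bool" where
  "C2_pos g \<longleftrightarrow> (\<forall>r>0. g r \<ge> 0) \<and> g differentiable_on {0<..} \<and>
      deriv g differentiable_on {0<..} \<and> continuous_on {0<..} (deriv (deriv g))"

definition classG :: "(real \<Rightarrow> real) set" where
  "classG = {g. C2_pos g \<and>
      mono_on {0<..} (\<lambda>r. sqrt r * g (sqrt r)) \<and>
      concave_on {0<..} (\<lambda>r. sqrt r * g (sqrt r)) \<and>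
      ((\<lambda>r. r * g r) \<longlongrightarrow> 0) (at_right 0)}"

definition classG_tilde :: "(real \<Rightarrow> real) set" where
  "classG_tilde = {g. g \<in> classG \<and> bounded (g ` {0<..}) \<and>
      (g \<longlongrightarrow> 0) (at_right 0) \<and>
      (\<forall>r>0. deriv g r \<ge> 0) \<and>
      (\<forall>r>0. 2 * deriv (deriv g) r + g r * deriv g r \<le> 0)}"

end

theory Submission imports Defs "HOL-Probability.Probability" begin

(* Since g is bounded, say by M, the hypothesis on \<kappa>_U gives
   \<langle>\<nabla>U x - \<nabla>U y, x - y\<rangle> \<ge> \<alpha> |x - y|^2 - M |x - y|.
   Integrating along the segment from 0 to x yields U x \<ge> U 0 + \<alpha>/2 |x|^2 - C |x|,
   so exp (\<sigma> |x|^2 - U x) is dominated by a multiple of a Gaussian density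
   whenever \<sigma> < \<alpha>/2. *)

lemma nn_integral_exp_neg_square_finite:
  fixes \<beta> :: real
  assumes "\<beta> > 0"
  shows "(\<integral>\<^sup>+ t. ennreal (exp (- \<beta> * t\<^sup>2)) \<partial>lborel) < \<infinity>"
proof -
  define s where "s = sqrt (1 / (2 * \<beta>))"
  have "s\<^sup>2 = 1 / (2 * \<beta>)" using assms by (simp add: s_def)
  then have gauss: "exp (- \<beta> * t\<^sup>2) = sqrt (2 * pi * s\<^sup>2) * normal_density 0 s t" for t
    using assms by (auto simp add: normal_density_def field_simps)
  have "integrable lborel (\<lambda>t. sqrt (2 * pi * s\<^sup>2) * normal_density 0 s t)"
    using integrable_normal_density[of s 0] assms by (intro integrable_mult_right) (simp add: s_def)
  then have "integrable lborel (\<lambda>t. exp (- \<beta> * t\<^sup>2))"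
    by (simp only: gauss)
  then show ?thesis
    by (simp add: integrable_iff_bounded)
qed

lemma nn_integral_exp_neg_norm_square_finite:
  fixes \<beta> :: real
  assumes "\<beta> > 0"
  shows "(\<integral>\<^sup>+ x. ennreal (exp (- \<beta> * (norm (x :: 'a::euclidean_space))\<^sup>2)) \<partial>lborel) < \<infinity>"
proof -
  have prod_eq: "ennreal (exp (- \<beta> * (norm x)\<^sup>2)) = (\<Prod>b\<in>Basis. ennreal (exp (- \<beta> * (x \<bullet> b)\<^sup>2)))"
    for x :: 'a
  proof -
    have "(norm x)\<^sup>2 = (\<Sum>b\<in>Basis. (x \<bullet> b)\<^sup>2)"
      unfolding power2_norm_eq_inner by (subst euclidean_inner) (simp add: power2_eq_square)
    then show ?thesis
      by (simp add: sum_distrib_left exp_sum prod_ennreal flip: sum_negf)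
  qed
  have "(\<integral>\<^sup>+ x. ennreal (exp (- \<beta> * (norm (x :: 'a))\<^sup>2)) \<partial>lborel)
      = (\<integral>\<^sup>+ x. (\<Prod>b\<in>Basis. ennreal (exp (- \<beta> * ((x :: 'a) \<bullet> b)\<^sup>2))) \<partial>lborel)"
    by (simp only: prod_eq)
  also have "\<dots> = (\<Prod>b\<in>(Basis :: 'a set). \<integral>\<^sup>+ t. ennreal (exp (- \<beta> * t\<^sup>2)) \<partial>lborel)"
    by (rule nn_integral_lborel_prod) auto
  also have "\<dots> < \<infinity>"
    using nn_integral_exp_neg_square_finite[OF assms] by (simp add: power_less_top_ennreal)
  finally show ?thesis .
qed

lemma nn_integral_exp_minus_finite_of_quadratic_growth:
  fixes U :: "'a::euclidean_space \<Rightarrow> real"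
  assumes growth: "\<And>x. U x \<ge> a + c * (norm x)\<^sup>2 - C * norm x"
    and "\<sigma> < c"
  shows "(\<integral>\<^sup>+ x. ennreal (exp (\<sigma> * (norm x)\<^sup>2) * exp (- U x)) \<partial>lborel) < \<infinity>"
proof -
  define \<beta> where "\<beta> = (c - \<sigma>) / 2"
  have "\<beta> > 0" using \<open>\<sigma> < c\<close> by (simp add: \<beta>_def)
  define K where "K = exp (- a + C\<^sup>2 / (4 * \<beta>))"
  have dominated: "exp (\<sigma> * (norm x)\<^sup>2) * exp (- U x) \<le> K * exp (- \<beta> * (norm x)\<^sup>2)" for x
  proof -
    have "0 \<le> (2 * \<beta> * norm x - C)\<^sup>2" by simp
    then have "C * norm x - \<beta> * (norm x)\<^sup>2 \<le> C\<^sup>2 / (4 * \<beta>)"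
      using \<open>\<beta> > 0\<close> by (simp add: power2_eq_square field_simps)
    moreover have "\<sigma> * (norm x)\<^sup>2 = c * (norm x)\<^sup>2 - 2 * \<beta> * (norm x)\<^sup>2"
      by (simp add: \<beta>_def field_simps)
    ultimately have "\<sigma> * (norm x)\<^sup>2 + - U x \<le> - a + C\<^sup>2 / (4 * \<beta>) + - \<beta> * (norm x)\<^sup>2"
      using growth[of x] by linarith
    then show ?thesis unfolding K_def by (simp flip: exp_add)
  qed
  have "(\<integral>\<^sup>+ x. ennreal (exp (\<sigma> * (norm x)\<^sup>2) * exp (- U x)) \<partial>lborel)
      \<le> (\<integral>\<^sup>+ x. ennreal K * ennreal (exp (- \<beta> * (norm (x :: 'a))\<^sup>2)) \<partial>lborel)"
    using dominated by (intro nn_integral_mono) (simp add: K_def ennreal_leI flip: ennreal_mult)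
  also have "\<dots> = ennreal K * (\<integral>\<^sup>+ x. ennreal (exp (- \<beta> * (norm (x :: 'a))\<^sup>2)) \<partial>lborel)"
    by (rule nn_integral_cmult) measurable
  also have "\<dots> < \<infinity>"
    using nn_integral_exp_neg_norm_square_finite[OF \<open>\<beta> > 0\<close>, where 'a='a]
    by (simp add: ennreal_mult_less_top)
  finally show ?thesis .
qed

lemma quadratic_lower_bound_of_inner_derivative:
  fixes U :: "'a::euclidean_space \<Rightarrow> real" and G :: "'a \<Rightarrow> 'a"
  assumes deriv: "\<And>x. (U has_derivative (\<lambda>h. G x \<bullet> h)) (at x)"
    and mono: "\<And>x y. x \<noteq> y \<Longrightarrow>
      (G x - G y) \<bullet> (x - y) \<ge> \<alpha> * (norm (x - y))\<^sup>2 - M * norm (x - y)"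
  shows "U x \<ge> U 0 + \<alpha> / 2 * (norm x)\<^sup>2 - (M + norm (G 0)) * norm x"
proof (cases "x = 0")
  case False
  define C where "C = M + norm (G 0)"
  define h where "h t = U (t *\<^sub>R x) - \<alpha> * (norm x)\<^sup>2 * t\<^sup>2 / 2 + C * norm x * t" for t
  have restriction_deriv: "((\<lambda>t. U (t *\<^sub>R x)) has_real_derivative (G (t *\<^sub>R x) \<bullet> x)) (at t)" for t
  proof -
    have "((\<lambda>t. t *\<^sub>R x) has_derivative (\<lambda>s. s *\<^sub>R x)) (at t)"
      by (auto intro!: derivative_eq_intros)
    from has_derivative_compose[OF this deriv]
    show ?thesis by (simp add: has_field_derivative_def mult_commute_abs)
  qed
  have h_deriv:
    "(h has_real_derivative (G (t *\<^sub>R x) \<bullet> x - \<alpha> * (norm x)\<^sup>2 * t + C * norm x)) (at t)" for t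
    unfolding h_def by (rule derivative_eq_intros restriction_deriv refl | simp)+
  have "h 0 \<le> h 1"
  proof (rule DERIV_nonneg_imp_increasing_open[of 0 1 h])
    fix t :: real
    assume t: "0 < t" "t < 1"
    with False have "\<alpha> * (t * norm x)\<^sup>2 - M * (t * norm x) \<le> (G (t *\<^sub>R x) - G 0) \<bullet> (t *\<^sub>R x)"
      using mono[of "t *\<^sub>R x" 0] by simp
    then have "t * (\<alpha> * t * (norm x)\<^sup>2 - M * norm x) \<le> t * ((G (t *\<^sub>R x) - G 0) \<bullet> x)"
      by (simp add: algebra_simps power2_eq_square)
    then have "\<alpha> * t * (norm x)\<^sup>2 - M * norm x \<le> (G (t *\<^sub>R x) - G 0) \<bullet> x"
      using t by simp
    moreover have "- (norm (G 0) * norm x) \<le> G 0 \<bullet> x"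
      using Cauchy_Schwarz_ineq2[of "G 0" x] by (simp add: abs_le_iff)
    ultimately have "0 \<le> G (t *\<^sub>R x) \<bullet> x - \<alpha> * (norm x)\<^sup>2 * t + C * norm x"
      by (simp add: C_def inner_diff_left algebra_simps)
    then show "\<exists>y. (h has_real_derivative y) (at t) \<and> 0 \<le> y"
      using h_deriv by blast
  next
    show "continuous_on {0..1} h"
      using h_deriv by (meson DERIV_isCont continuous_at_imp_continuous_on)
  qed simp
  then show ?thesis by (simp add: h_def C_def)
qed simp

lemma grad_eqI:
  fixes U :: "'a::euclidean_space \<Rightarrow> real"
  assumes "(U has_derivative (\<lambda>h. v \<bullet> h)) (at x)"
  shows "grad U x = v"
  unfolding grad_def
proof (rule the_equality)
  fix w
  assume "(U has_derivative (\<lambda>h. w \<bullet> h)) (at x)"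
  from has_derivative_unique[OF this assms] have "w \<bullet> (w - v) = v \<bullet> (w - v)"
    by metis
  then have "(w - v) \<bullet> (w - v) = 0" by (simp add: inner_diff_left)
  then show "w = v" by simp
qed (fact assms)

lemma kappa_le_inner_grad_diff:
  fixes U :: "'a::euclidean_space \<Rightarrow> real"
  shows "kappa U (norm (x - y)) \<le> ereal ((grad U x - grad U y) \<bullet> (x - y) / (norm (x - y))\<^sup>2)"
  unfolding kappa_def by (rule INF_lower2[of "(x, y)"]) auto

lemma inner_grad_diff_ge_of_kappa_ge:
  fixes U :: "'a::euclidean_space \<Rightarrow> real"
  assumes kappa: "\<forall>r>0. kappa U r \<ge> ereal (\<alpha> - g r / r)"
    and bound: "\<And>r. r > 0 \<Longrightarrow> g r \<le> M"
    and "x \<noteq> y"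
  shows "(grad U x - grad U y) \<bullet> (x - y) \<ge> \<alpha> * (norm (x - y))\<^sup>2 - M * norm (x - y)"
proof -
  define r where "r = norm (x - y)"
  have "r > 0" using \<open>x \<noteq> y\<close> by (simp add: r_def)
  have "ereal (\<alpha> - g r / r) \<le> ereal ((grad U x - grad U y) \<bullet> (x - y) / r\<^sup>2)"
    using kappa \<open>r > 0\<close> kappa_le_inner_grad_diff[of U x y] unfolding r_def by (blast intro: order_trans)
  then have "(\<alpha> - g r / r) * r\<^sup>2 \<le> (grad U x - grad U y) \<bullet> (x - y)"
    using \<open>r > 0\<close> by (simp add: pos_le_divide_eq)
  moreover have "(\<alpha> - g r / r) * r\<^sup>2 = \<alpha> * r\<^sup>2 - g r * r"
    using \<open>r > 0\<close> by (simp add: field_simps power2_eq_square)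
  moreover have "g r * r \<le> M * r"
    using bound[OF \<open>r > 0\<close>] \<open>r > 0\<close> by (simp add: mult_right_mono)
  ultimately show ?thesis unfolding r_def by linarith
qed

theorem lemma31:
  fixes U :: "'a::euclidean_space \<Rightarrow> real" and \<alpha> \<sigma> :: real and g :: "real \<Rightarrow> real"
  assumes "C2_on_UNIV U"
    and "integrable lborel (\<lambda>x. exp (- U x))"
    and "(\<integral>x. exp (- U x) \<partial>lborel) = 1"
    and "\<alpha> > 0"
    and "g \<in> classG_tilde"
    and "\<forall>r>0. kappa U r \<ge> ereal (\<alpha> - g r / r)"
    and "0 < \<sigma>" and "\<sigma> < \<alpha> / 2"
  shows "(\<integral>\<^sup>+ x. ennreal (exp (\<sigma> * (norm x)\<^sup>2) * exp (- U x)) \<partial>lborel) < \<infinity>"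
proof -
  obtain G :: "'a \<Rightarrow> 'a" where deriv: "\<And>x. (U has_derivative (\<lambda>h. G x \<bullet> h)) (at x)"
    using assms(1) unfolding C2_on_UNIV_def by blast
  then have grad: "grad U = G"
    by (auto intro: grad_eqI)
  have "bounded (g ` {0<..})"
    using assms(5) unfolding classG_tilde_def by blast
  then obtain M where "\<And>r. r > 0 \<Longrightarrow> g r \<le> M"
    unfolding bounded_iff by (metis abs_le_D1 greaterThan_iff image_eqI real_norm_def)
  then have "\<And>x y. x \<noteq> y \<Longrightarrow> (G x - G y) \<bullet> (x - y) \<ge> \<alpha> * (norm (x - y))\<^sup>2 - M * norm (x - y)"
    using inner_grad_diff_ge_of_kappa_ge[OF assms(6)] by (simp add: grad)
  then have "\<And>x. U x \<ge> U 0 + \<alpha> / 2 * (norm x)\<^sup>2 - (M + norm (G 0)) * norm x"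
    using quadratic_lower_bound_of_inner_derivative[OF deriv] by blast
  then show ?thesis
    using nn_integral_exp_minus_finite_of_quadratic_growth \<open>\<sigma> < \<alpha> / 2\<close> by blast
qed

end
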